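(* Let $\mathcal{M}$ be a saturated model of Presburger arithmetic, $\mathcal{M}_0\preceq\mathcal{M}$ a small elementary submodel, and $C\subseteq\mathcal{M}^2$ a $(1,1)$-cell definable over $\mathcal{M}_0$. Let $(a,b)\in C$ with $\dim((a,b)/\mathcal{M}_0)=2$. Then there is a definable box $B$ around $(a,b)$ with $B\subseteq C$.
   Context: Presburger arithmetic is $\mathrm{Th}(\mathbb{Z},+,-,<,0,1,\{\equiv_n\}_n)$. A $B$-linear function is $f(x)=\sum_i s_i\frac{x_i-c_i}{k_i}+\gamma$ with $s_i,k_i,c_i$ integers, $0\le c_i<k_i$, $x_i\equiv_{k_i}c_i$, and $\gamma\in\mathrm{dcl}(B)$. A $B$-definable $1$-cell is an infinite set $\{x: \alpha\ \square_1\ x\ \square_2\ \beta,\ x\equiv_N c\}$ with $\alpha,\beta\in\mathrm{dcl}(B)$, $0\le c<N$ integers and each $\square_j$ either $\le$ or no condition. A $(1,1)$-cell is a set $\{(x,t): x\in D,\ \alpha(x)\ \square_1\ t\ \square_2\ \beta(x),\ t\equiv_N k\}$ with $D$ a $1$-cell, $\alpha,\beta$ $B$-linear functions on $D$, $0\le k<N$ integers, such that the fiber sizes are not uniformly bounded by a natural number. The dimension of a tuple over $\mathcal{M}_0$ is the size of a maximal dcl-independent subset of its coordinates over $\mathcal{M}_0$. A box around a point $p\in\mathcal{M}^n$ is a product $B_1\times\dots\times B_n$ of sets $B_i=\{x:\alpha_i\ \square_1\ x\ \square_2\ \beta_i,\ x\equiv_{N_i}c_i\}$ with $p_i\in B_i$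 and both $[\alpha_i,p_i]$ and $[p_i,\beta_i]$ infinite. *)

theory Defs
  imports Main "HOL-Library.Equipollence"
begin

record 'm pstr =
  carr :: "'m set"
  padd :: "'m \<Rightarrow> 'm \<Rightarrow> 'm"
  psub :: "'m \<Rightarrow> 'm \<Rightarrow> 'm"
  plt  :: "'m \<Rightarrow> 'm \<Rightarrow> bool"
  pzero :: 'm
  pone :: 'm
  pcong :: "nat \<Rightarrow> 'm \<Rightarrow> 'm \<Rightarrow> bool"

datatype ptrm = V nat | Zr | On | Ad ptrm ptrm | Sb ptrm ptrm

datatype pfm = Eq ptrm ptrm | Lt ptrm ptrm | Cg nat ptrm ptrm
  | Neg pfm | Conj pfm pfm | Ex nat pfm

primrec tval :: "'m pstr \<Rightarrow> (nat \<Rightarrow> 'm) \<Rightarrow> ptrm \<Rightarrow> 'm" where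
  "tval M e (V i) = e i"
| "tval M e Zr = pzero M"
| "tval M e On = pone M"
| "tval M e (Ad s t) = padd M (tval M e s) (tval M e t)"
| "tval M e (Sb s t) = psub M (tval M e s) (tval M e t)"

primrec sat :: "'m pstr \<Rightarrow> pfm \<Rightarrow> (nat \<Rightarrow> 'm) \<Rightarrow> bool" where
  "sat M (Eq s t) e = (tval M e s = tval M e t)"
| "sat M (Lt s t) e = plt M (tval M e s) (tval M e t)"
| "sat M (Cg n s t) e = pcong M n (tval M e s) (tval M e t)"
| "sat M (Neg \<phi>) e = (\<not> sat M \<phi> e)"
| "sat M (Conj \<phi> \<psi>) e = (sat M \<phi> e \<and> sat M \<psi> e)"
| "sat M (Ex x \<phi>) e = (\<exists>a\<in>carr M. sat M \<phi> (e(x := a)))"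

primrec fvt :: "ptrm \<Rightarrow> nat set" where
  "fvt (V i) = {i}"
| "fvt Zr = {}"
| "fvt On = {}"
| "fvt (Ad s t) = fvt s \<union> fvt t"
| "fvt (Sb s t) = fvt s \<union> fvt t"

primrec fv :: "pfm \<Rightarrow> nat set" where
  "fv (Eq s t) = fvt s \<union> fvt t"
| "fv (Lt s t) = fvt s \<union> fvt t"
| "fv (Cg n s t) = fvt s \<union> fvt t"
| "fv (Neg \<phi>) = fv \<phi>"
| "fv (Conj \<phi> \<psi>) = fv \<phi> \<union> fv \<psi>"
| "fv (Ex x \<phi>) = fv \<phi> - {x}"

definition Zstr :: "int pstr" where
  "Zstr = \<lparr>carr = UNIV, padd = (+), psub = (-), plt = (<), pzero = 0, pone = 1,
           pcong = (\<lambda>n x y. int n dvd (x - y))\<rparr>"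

definition is_pstruct :: "'m pstr \<Rightarrow> bool" where
  "is_pstruct M \<longleftrightarrow> pzero M \<in> carr M \<and> pone M \<in> carr M \<and>
     (\<forall>x\<in>carr M. \<forall>y\<in>carr M. padd M x y \<in> carr M \<and> psub M x y \<in> carr M)"

definition presburger_model :: "'m pstr \<Rightarrow> bool" where
  "presburger_model M \<longleftrightarrow> is_pstruct M \<and>
     (\<forall>\<phi> e e'. fv \<phi> = {} \<longrightarrow> range e' \<subseteq> carr M \<longrightarrow> (sat Zstr \<phi> e \<longleftrightarrow> sat M \<phi> e'))"

definition elem_sub :: "'m set \<Rightarrow> 'm pstr \<Rightarrow> bool" where
  "elem_sub A M \<longleftrightarrow> A \<subseteq> carr M \<and> A \<noteq> {} \<and> is_pstruct (M\<lparr>carr := A\<rparr>) \<and>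
     (\<forall>\<phi> e. range e \<subseteq> A \<longrightarrow> (sat (M\<lparr>carr := A\<rparr>) \<phi> e \<longleftrightarrow> sat M \<phi> e))"

text \<open>Formula with parameters from A (variable 0 is the free object variable).\<close>

definition params_in :: "'m pstr \<Rightarrow> 'm set \<Rightarrow> pfm \<Rightarrow> (nat \<Rightarrow> 'm) \<Rightarrow> bool" where
  "params_in M A \<phi> e \<longleftrightarrow> range e \<subseteq> carr M \<and> (\<forall>v \<in> fv \<phi> - {0}. e v \<in> A)"

definition saturated :: "'m pstr \<Rightarrow> bool" where
  "saturated M \<longleftrightarrow>
     (\<forall>A p. A \<subseteq> carr M \<longrightarrow> A \<prec> carr M \<longrightarrow>
        (\<forall>(\<phi>, e) \<in> p. params_in M A \<phi> e) \<longrightarrow>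
        (\<forall>q \<subseteq> p. finite q \<longrightarrow> (\<exists>b\<in>carr M. \<forall>(\<phi>, e) \<in> q. sat M \<phi> (e(0 := b)))) \<longrightarrow>
        (\<exists>b\<in>carr M. \<forall>(\<phi>, e) \<in> p. sat M \<phi> (e(0 := b))))"

definition dcl :: "'m pstr \<Rightarrow> 'm set \<Rightarrow> 'm set" where
  "dcl M A = {c \<in> carr M. \<exists>\<phi> e. params_in M A \<phi> e \<and>
                 {x \<in> carr M. sat M \<phi> (e(0 := x))} = {c}}"

definition dcl_indep :: "'m pstr \<Rightarrow> 'm set \<Rightarrow> 'm set \<Rightarrow> bool" where
  "dcl_indep M A S \<longleftrightarrow> (\<forall>s\<in>S. s \<notin> dcl M (A \<union> (S - {s})))"

definition tdim :: "'m pstr \<Rightarrow> 'm set \<Rightarrow> 'm list \<Rightarrow> nat" where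
  "tdim M A xs = Max (card ` {S. S \<subseteq> set xs \<and> dcl_indep M A S})"

definition definable2 :: "'m pstr \<Rightarrow> ('m \<times> 'm) set \<Rightarrow> bool" where
  "definable2 M X \<longleftrightarrow> (\<exists>\<phi> e. range e \<subseteq> carr M \<and>
     X = {(x, y). x \<in> carr M \<and> y \<in> carr M \<and> sat M \<phi> (e(0 := x, 1 := y))})"

definition ple :: "'m pstr \<Rightarrow> 'm \<Rightarrow> 'm \<Rightarrow> bool" where
  "ple M x y \<longleftrightarrow> plt M x y \<or> x = y"

primrec numM :: "'m pstr \<Rightarrow> nat \<Rightarrow> 'm" where
  "numM M 0 = pzero M"
| "numM M (Suc k) = padd M (numM M k) (pone M)"

primrec smul :: "'m pstr \<Rightarrow> nat \<Rightarrow> 'm \<Rightarrow> 'm" where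
  "smul M 0 x = pzero M"
| "smul M (Suc k) x = padd M (smul M k x) x"

definition ismul :: "'m pstr \<Rightarrow> int \<Rightarrow> 'm \<Rightarrow> 'm" where
  "ismul M s x = (if 0 \<le> s then smul M (nat s) x else psub M (pzero M) (smul M (nat (- s)) x))"

text \<open>Optional bounds: None means "no condition".\<close>

definition lowb :: "'m pstr \<Rightarrow> 'm option \<Rightarrow> 'm \<Rightarrow> bool" where
  "lowb M \<alpha> x = (case \<alpha> of None \<Rightarrow> True | Some a \<Rightarrow> ple M a x)"

definition uppb :: "'m pstr \<Rightarrow> 'm option \<Rightarrow> 'm \<Rightarrow> bool" where
  "uppb M \<beta> x = (case \<beta> of None \<Rightarrow> True | Some b \<Rightarrow> ple M x b)"

definition intv :: "'m pstr \<Rightarrow> 'm option \<Rightarrow> 'm option \<Rightarrow> nat \<Rightarrow> nat \<Rightarrow> 'm set" where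
  "intv M \<alpha> \<beta> N c = {x \<in> carr M. lowb M \<alpha> x \<and> uppb M \<beta> x \<and> pcong M N x (numM M c)}"

definition B_definable_1cell :: "'m pstr \<Rightarrow> 'm set \<Rightarrow> 'm set \<Rightarrow> bool" where
  "B_definable_1cell M B D \<longleftrightarrow> (\<exists>\<alpha> \<beta> N c.
     c < N \<and> set_option \<alpha> \<subseteq> dcl M B \<and> set_option \<beta> \<subseteq> dcl M B \<and>
     D = intv M \<alpha> \<beta> N c \<and> infinite D)"

text \<open>A one-variable B-linear function f(x) = s (x - c)/k + gamma, represented by
  (s, k, c, gamma); (x - c)/k is the element y with k y + c = x.\<close>

definition lin_eval :: "'m pstr \<Rightarrow> int \<times> nat \<times> nat \<times> 'm \<Rightarrow> 'm \<Rightarrow> 'm" where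
  "lin_eval M f x = (case f of (s, k, c, \<gamma>) \<Rightarrow>
     padd M (ismul M s (THE y. y \<in> carr M \<and> padd M (smul M k y) (numM M c) = x)) \<gamma>)"

definition B_linear_on :: "'m pstr \<Rightarrow> 'm set \<Rightarrow> 'm set \<Rightarrow> int \<times> nat \<times> nat \<times> 'm \<Rightarrow> bool" where
  "B_linear_on M B D f \<longleftrightarrow> (case f of (s, k, c, \<gamma>) \<Rightarrow>
     c < k \<and> \<gamma> \<in> dcl M B \<and> (\<forall>x\<in>D. pcong M k x (numM M c)))"

definition lowf :: "'m pstr \<Rightarrow> (int \<times> nat \<times> nat \<times> 'm) option \<Rightarrow> 'm \<Rightarrow> 'm \<Rightarrow> bool" where
  "lowf M \<alpha> x t = (case \<alpha> of None \<Rightarrow> True | Some f \<Rightarrow> ple M (lin_eval M f x) t)"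

definition uppf :: "'m pstr \<Rightarrow> (int \<times> nat \<times> nat \<times> 'm) option \<Rightarrow> 'm \<Rightarrow> 'm \<Rightarrow> bool" where
  "uppf M \<beta> x t = (case \<beta> of None \<Rightarrow> True | Some f \<Rightarrow> ple M t (lin_eval M f x))"

definition B_definable_11cell :: "'m pstr \<Rightarrow> 'm set \<Rightarrow> ('m \<times> 'm) set \<Rightarrow> bool" where
  "B_definable_11cell M B C \<longleftrightarrow> (\<exists>D \<alpha> \<beta> N k.
     B_definable_1cell M B D \<and>
     (\<forall>f \<in> set_option \<alpha>. B_linear_on M B D f) \<and>
     (\<forall>f \<in> set_option \<beta>. B_linear_on M B D f) \<and> k < N \<and>
     C = {(x, t). x \<in> D \<and> t \<in> carr M \<and> lowf M \<alpha> x t \<and> uppf M \<beta> x t \<and>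
                  pcong M N t (numM M k)} \<and>
     (\<forall>n::nat. \<exists>x\<in>D. infinite {t. (x, t) \<in> C} \<or> card {t. (x, t) \<in> C} > n))"

definition box_comp :: "'m pstr \<Rightarrow> 'm set \<Rightarrow> 'm \<Rightarrow> bool" where
  "box_comp M S p \<longleftrightarrow> (\<exists>\<alpha> \<beta> N c. c < N \<and>
     set_option \<alpha> \<subseteq> carr M \<and> set_option \<beta> \<subseteq> carr M \<and>
     S = intv M \<alpha> \<beta> N c \<and> p \<in> S \<and>
     infinite {x \<in> carr M. lowb M \<alpha> x \<and> ple M x p} \<and>
     infinite {x \<in> carr M. ple M p x \<and> uppb M \<beta> x})"

definition box_around :: "'m pstr \<Rightarrow> ('m \<times> 'm) set \<Rightarrow> 'm \<times> 'm \<Rightarrow> bool" where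
  "box_around M X p \<longleftrightarrow> (\<exists>S1 S2. X = S1 \<times> S2 \<and> box_comp M S1 (fst p) \<and> box_comp M S2 (snd p))"

end

theory Submission
  imports Defs
begin

text \<open>Since \<open>(a, b)\<close> has dimension 2, \<open>a \<notin> dcl M0\<close> and \<open>b \<notin> dcl (M0 \<union> {a})\<close>.
  Shifting by a standard integer preserves definability, so an element outside a definable
  closure is infinitely far from every element inside it. The endpoints of the base 1-cell lie in
  \<open>dcl M0\<close> and the bounding linear functions evaluated at \<open>a\<close> lie in \<open>dcl (M0 \<union> {a})\<close>, so
  \<open>a\<close> is infinitely far from the former and \<open>b\<close> from the latter. Take an infinite \<open>e\<close> with
  \<open>m e\<close> below all these distances, where \<open>m\<close> exceeds every slope: moving \<open>x\<close> by at most \<open>e\<close>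
  moves a bounding function by at most \<open>(m - 1) e\<close>, so the box \<open>[a - e, a + e] \<times> [b - e, b + e]\<close>,
  cut down by the congruences of the cell, lies in the cell. All arithmetic used is first-order
  and transferred from \<open>\<int>\<close>.\<close>

definition Or :: "pfm \<Rightarrow> pfm \<Rightarrow> pfm" where "Or p q = Neg (Conj (Neg p) (Neg q))"
definition Imp :: "pfm \<Rightarrow> pfm \<Rightarrow> pfm" where "Imp p q = Neg (Conj p (Neg q))"
definition All :: "nat \<Rightarrow> pfm \<Rightarrow> pfm" where "All x p = Neg (Ex x (Neg p))"
definition Le :: "ptrm \<Rightarrow> ptrm \<Rightarrow> pfm" where "Le s t = Or (Lt s t) (Eq s t)"

primrec Or_upto :: "nat \<Rightarrow> (nat \<Rightarrow> pfm) \<Rightarrow> pfm" where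
  "Or_upto 0 P = P 0"
| "Or_upto (Suc n) P = Or (Or_upto n P) (P (Suc n))"

primrec numT :: "nat \<Rightarrow> ptrm" where
  "numT 0 = Zr"
| "numT (Suc n) = Ad (numT n) On"

primrec smulT :: "nat \<Rightarrow> ptrm \<Rightarrow> ptrm" where
  "smulT 0 t = Zr"
| "smulT (Suc k) t = Ad (smulT k t) t"

definition ismulT :: "int \<Rightarrow> ptrm \<Rightarrow> ptrm" where
  "ismulT s t = (if 0 \<le> s then smulT (nat s) t else Sb Zr (smulT (nat (- s)) t))"

lemma sat_Or [simp]: "sat M (Or p q) e = (sat M p e \<or> sat M q e)"
  by (simp add: Or_def)
lemma sat_Imp [simp]: "sat M (Imp p q) e = (sat M p e \<longrightarrow> sat M q e)"
  by (simp add: Imp_def)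
lemma sat_All [simp]: "sat M (All x p) e = (\<forall>a\<in>carr M. sat M p (e(x := a)))"
  by (simp add: All_def)
lemma sat_Le [simp]: "sat M (Le s t) e = ple M (tval M e s) (tval M e t)"
  by (simp add: Le_def ple_def)
lemma sat_Or_upto [simp]: "sat M (Or_upto n P) e = (\<exists>j\<le>n. sat M (P j) e)"
  by (induct n) (auto simp: le_Suc_eq)

lemma fv_Or [simp]: "fv (Or p q) = fv p \<union> fv q"
  by (simp add: Or_def)
lemma fv_Imp [simp]: "fv (Imp p q) = fv p \<union> fv q"
  by (simp add: Imp_def)
lemma fv_All [simp]: "fv (All x p) = fv p - {x}"
  by (simp add: All_def)
lemma fv_Le [simp]: "fv (Le s t) = fvt s \<union> fvt t"
  by (simp add: Le_def)
lemma fv_Or_upto [simp]: "fv (Or_upto n P) = (\<Union>j\<le>n. fv (P j))"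
  by (induct n) (auto simp: le_Suc_eq)

lemma tval_numT [simp]: "tval M e (numT n) = numM M n"
  by (induct n) auto
lemma fvt_numT [simp]: "fvt (numT n) = {}"
  by (induct n) auto
lemma tval_smulT [simp]: "tval M e (smulT k t) = smul M k (tval M e t)"
  by (induct k) auto
lemma fvt_smulT [simp]: "fvt (smulT k t) = (if k = 0 then {} else fvt t)"
  by (induct k) auto
lemma tval_ismulT [simp]: "tval M e (ismulT s t) = ismul M s (tval M e t)"
  by (simp add: ismulT_def ismul_def)
lemma fvt_ismulT [simp]: "fvt (ismulT s t) = (if s = 0 then {} else fvt t)"
  by (simp add: ismulT_def)

section \<open>Transfer from the integers\<close>

lemma Zstr_simps [simp]:
  "carr Zstr = UNIV" "padd Zstr = (+)" "psub Zstr = (-)" "plt Zstr = (<)"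
  "pzero Zstr = 0" "pone Zstr = 1" "pcong Zstr n x y = (int n dvd (x - y))"
  by (simp_all add: Zstr_def)
lemma ple_Zstr [simp]: "ple Zstr x y = (x \<le> y)"
  by (auto simp: ple_def)
lemma numM_Zstr [simp]: "numM Zstr n = int n"
  by (induct n) auto
lemma smul_Zstr [simp]: "smul Zstr k x = int k * x"
  by (induct k) (auto simp: algebra_simps)
lemma ismul_Zstr [simp]: "ismul Zstr s x = s * x"
  by (simp add: ismul_def)

lemma abs_scaled_quotient_diff_le:
  fixes k s :: int
  assumes "1 \<le> k" "k * y + c = x" "k * y' + c = x'" "\<bar>x' - x\<bar> \<le> e"
  shows "\<bar>s * y' - s * y\<bar> \<le> \<bar>s\<bar> * e"
proof -
  have "\<bar>y' - y\<bar> \<le> k * \<bar>y' - y\<bar>" using \<open>1 \<le> k\<close> by (simp add: mult_le_cancel_right1)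
  also have "\<dots> = \<bar>x' - x\<bar>"
  proof -
    have "x' - x = k * (y' - y)" using assms(2,3) by (simp add: algebra_simps)
    then show ?thesis using \<open>1 \<le> k\<close> by (simp add: abs_mult)
  qed
  finally have "\<bar>y' - y\<bar> \<le> e" using assms(4) by linarith
  then show ?thesis by (simp add: abs_mult mult_left_mono flip: right_diff_distrib)
qed

lemma presburger_transfer:
  assumes "presburger_model M" "fv \<phi> = {}" "sat Zstr \<phi> (\<lambda>_. 0)"
  shows "sat M \<phi> (\<lambda>_. pzero M)"
proof -
  have "pzero M \<in> carr M" using assms(1) by (simp add: presburger_model_def is_pstruct_def)
  then show ?thesis using assms unfolding presburger_model_def by force
qed

section \<open>Definable closure\<close>

primrec rename_trm :: "(nat \<Rightarrow> nat) \<Rightarrow> ptrm \<Rightarrow> ptrm" where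
  "rename_trm g (V i) = V (g i)"
| "rename_trm g Zr = Zr"
| "rename_trm g On = On"
| "rename_trm g (Ad s t) = Ad (rename_trm g s) (rename_trm g t)"
| "rename_trm g (Sb s t) = Sb (rename_trm g s) (rename_trm g t)"

primrec rename :: "(nat \<Rightarrow> nat) \<Rightarrow> pfm \<Rightarrow> pfm" where
  "rename g (Eq s t) = Eq (rename_trm g s) (rename_trm g t)"
| "rename g (Lt s t) = Lt (rename_trm g s) (rename_trm g t)"
| "rename g (Cg n s t) = Cg n (rename_trm g s) (rename_trm g t)"
| "rename g (Neg p) = Neg (rename g p)"
| "rename g (Conj p q) = Conj (rename g p) (rename g q)"
| "rename g (Ex x p) = Ex (g x) (rename g p)"

lemma tval_rename_trm [simp]: "tval M e (rename_trm g t) = tval M (e \<circ> g) t"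
  by (induct t) auto

lemma fvt_rename_trm [simp]: "fvt (rename_trm g t) = g ` fvt t"
  by (induct t) auto

lemma sat_rename: "inj g \<Longrightarrow> sat M (rename g p) e = sat M p (e \<circ> g)"
proof (induct p arbitrary: e)
  case (Ex x p)
  have "(e(g x := a)) \<circ> g = (e \<circ> g)(x := a)" for a
    using Ex.prems by (auto simp: fun_eq_iff inj_eq)
  then show ?case using Ex by (simp only: rename.simps sat.simps)
qed (simp_all add: comp_def)

lemma fv_rename: "inj g \<Longrightarrow> fv (rename g p) = g ` fv p"
  by (induct p) (auto simp: inj_eq)

lemma dclI:
  "c \<in> carr M \<Longrightarrow> params_in M A \<phi> e \<Longrightarrow> {x \<in> carr M. sat M \<phi> (e(0 := x))} = {c} \<Longrightarrow> c \<in> dcl M A"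
  unfolding dcl_def by blast

lemma dclE:
  assumes "c \<in> dcl M A"
  obtains \<phi> e where "c \<in> carr M" "params_in M A \<phi> e" "{x \<in> carr M. sat M \<phi> (e(0 := x))} = {c}"
  using assms unfolding dcl_def by blast

lemma dcl_carr: "c \<in> dcl M A \<Longrightarrow> c \<in> carr M"
  unfolding dcl_def by blast

lemma dcl_mono:
  assumes "A \<subseteq> B"
  shows "dcl M A \<subseteq> dcl M B"
proof
  fix c assume "c \<in> dcl M A"
  then obtain \<phi> e where "c \<in> carr M" "params_in M A \<phi> e" "{x \<in> carr M. sat M \<phi> (e(0 := x))} = {c}"
    by (rule dclE)
  with assms show "c \<in> dcl M B" by (intro dclI) (auto simp: params_in_def)
qed

lemma dcl_closed:
  assumes u: "u \<in> dcl M A" and j: "j \<noteq> 0"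
    and e: "range e \<subseteq> carr M" "\<forall>w\<in>fv \<psi> - {0, j}. e w \<in> A"
    and v: "{x \<in> carr M. sat M \<psi> (e(0 := x, j := u))} = {v}"
  shows "v \<in> dcl M A"
proof -
  obtain \<phi> eu where uc: "u \<in> carr M" and pu: "params_in M A \<phi> eu"
    and du: "{x \<in> carr M. sat M \<phi> (eu(0 := x))} = {u}"
    using u by (rule dclE)
  define J where "J = 2 * j + 2"
  define g1 where "g1 = (\<lambda>w::nat. if w = 0 then J else 2 * w + 3)"
  define g2 where "g2 = (\<lambda>w::nat. if w = 0 then 0 else 2 * w + 2)"
  define E where "E = (\<lambda>w::nat. if even w then e ((w - 2) div 2) else eu ((w - 3) div 2))"
  define \<Theta> where "\<Theta> = Ex J (Conj (rename g1 \<phi>) (rename g2 \<psi>))"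
  \<comment> \<open>\<open>\<Theta>\<close> says \<open>\<exists>z. \<phi>(z) \<and> \<psi>(x, z)\<close>, with the variables of \<open>\<phi>\<close> moved to odd and
    those of \<open>\<psi>\<close> to even indices so that the parameter assignments \<open>eu\<close> and \<open>e\<close> can be merged.\<close>
  have inj: "inj g1" "inj g2" unfolding inj_def g1_def g2_def J_def by presburger+
  have "(E(0 := x, J := z)) \<circ> g1 = eu(0 := z)" for x z
    unfolding g1_def E_def J_def by (auto simp: fun_eq_iff) presburger+
  moreover have "(E(0 := x, J := z)) \<circ> g2 = e(0 := x, j := z)" for x z
    unfolding g2_def E_def J_def using j by (auto simp: fun_eq_iff)
  ultimately have "sat M \<Theta> (E(0 := x)) \<longleftrightarrow> (\<exists>z\<in>carr M. sat M \<phi> (eu(0 := z)) \<and> sat M \<psi> (e(0 := x, j := z)))"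
    for x unfolding \<Theta>_def J_def by (simp add: sat_rename[OF inj(1)] sat_rename[OF inj(2)] fun_upd_twist)
  also have "\<dots> x \<longleftrightarrow> sat M \<psi> (e(0 := x, j := u))" for x
    using du uc by (auto simp: set_eq_iff)
  finally have "{x \<in> carr M. sat M \<Theta> (E(0 := x))} = {v}" using v by simp
  moreover have "params_in M A \<Theta> E"
  proof -
    have "range E \<subseteq> carr M" using e(1) pu unfolding E_def params_in_def by auto
    moreover have "E w \<in> A" if w: "w \<in> fv \<Theta> - {0}" for w
    proof -
      have fv\<Theta>: "fv \<Theta> = (g1 ` fv \<phi> \<union> g2 ` fv \<psi>) - {J}"
        unfolding \<Theta>_def by (simp add: fv_rename[OF inj(1)] fv_rename[OF inj(2)])
      consider v' where "v' \<in> fv \<phi>" "w = g1 v'" "w \<noteq> J"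
        | v' where "v' \<in> fv \<psi>" "w = g2 v'" "w \<noteq> J" "w \<noteq> 0"
        using w unfolding fv\<Theta> by blast
      then show ?thesis
      proof cases
        case (1 v')
        then have "v' \<noteq> 0" "E w = eu v'" unfolding g1_def E_def by (auto split: if_splits)
        with 1 pu show ?thesis unfolding params_in_def by simp
      next
        case (2 v')
        then have "v' \<noteq> 0" "v' \<noteq> j" "E w = e v'" unfolding g2_def E_def J_def by (auto split: if_splits)
        with 2 e(2) show ?thesis by simp
      qed
    qed
    ultimately show ?thesis unfolding params_in_def by blast
  qed
  ultimately show ?thesis using v by (blast intro: dclI)
qed

section \<open>Arithmetic in a model of Presburger arithmetic\<close>

lemma ple_refl [simp]: "ple M x x"
  by (simp add: ple_def)

locale presburger_structure =
  fixes M :: "'m pstr"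
  assumes PM: "presburger_model M"
begin

lemma carr_closed:
  shows "pzero M \<in> carr M" "pone M \<in> carr M"
    and "x \<in> carr M \<Longrightarrow> y \<in> carr M \<Longrightarrow> padd M x y \<in> carr M"
    and "x \<in> carr M \<Longrightarrow> y \<in> carr M \<Longrightarrow> psub M x y \<in> carr M"
  using PM by (auto simp: presburger_model_def is_pstruct_def)

lemma numM_carr: "numM M n \<in> carr M"
  by (induct n) (auto intro: carr_closed)

lemma smul_carr: "x \<in> carr M \<Longrightarrow> smul M k x \<in> carr M"
  by (induct k) (auto intro: carr_closed)

lemma ismul_carr: "x \<in> carr M \<Longrightarrow> ismul M s x \<in> carr M"
  by (auto simp: ismul_def intro: carr_closed smul_carr)

lemma plt_linear:
  assumes "x \<in> carr M" "y \<in> carr M"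
  shows "plt M x y \<or> x = y \<or> plt M y x"
proof -
  have "sat M (All 1 (All 2 (Or (Lt (V 1) (V 2)) (Or (Eq (V 1) (V 2)) (Lt (V 2) (V 1))))))
      (\<lambda>_. pzero M)"
    by (rule presburger_transfer[OF PM]) (simp, auto)
  from this[simplified] assms show ?thesis by blast
qed

lemma plt_trans:
  assumes "x \<in> carr M" "y \<in> carr M" "z \<in> carr M" "plt M x y" "plt M y z"
  shows "plt M x z"
proof -
  have "sat M (All 1 (All 2 (All 3 (Imp (Conj (Lt (V 1) (V 2)) (Lt (V 2) (V 3))) (Lt (V 1) (V 3))))))
      (\<lambda>_. pzero M)"
    by (rule presburger_transfer[OF PM]) (simp, auto)
  from this[simplified] assms show ?thesis by blast
qed

lemma ple_trans:
  "x \<in> carr M \<Longrightarrow> y \<in> carr M \<Longrightarrow> z \<in> carr M \<Longrightarrow> ple M x y \<Longrightarrow> ple M y z \<Longrightarrow> ple M x z"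
  unfolding ple_def using plt_trans by blast

lemma not_plt_iff_ple:
  assumes "x \<in> carr M" "y \<in> carr M"
  shows "\<not> plt M x y \<longleftrightarrow> ple M y x"
proof -
  have "sat M (All 1 (Neg (Lt (V 1) (V 1)))) (\<lambda>_. pzero M)"
    by (rule presburger_transfer[OF PM]) (simp, auto)
  then show ?thesis
    using assms plt_linear[of x y] plt_trans[of x y x] unfolding ple_def by auto
qed

lemma bounded_diff_eq_padd_num:
  assumes "u \<in> carr M" "v \<in> carr M" "ple M u v" "ple M (psub M v u) (numM M n)"
  shows "\<exists>j. v = padd M u (numM M j)"
proof -
  have "sat M (All 1 (All 2 (Imp (Conj (Le (V 1) (V 2)) (Le (Sb (V 2) (V 1)) (numT n)))
      (Or_upto n (\<lambda>j. Eq (V 2) (Ad (V 1) (numT j))))))) (\<lambda>_. pzero M)"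
    (is "sat M ?\<phi> _")
  proof (rule presburger_transfer[OF PM])
    show "sat Zstr ?\<phi> (\<lambda>_. 0)"
    proof (simp, intro allI impI)
      fix u v :: int
      assume "u \<le> v \<and> v - u \<le> int n"
      then show "\<exists>j\<le>n. v = u + int j" by (intro exI[of _ "nat (v - u)"]) auto
    qed
  qed auto
  from this[simplified] assms show ?thesis by blast
qed

lemma bounded_diff_eq_psub_num:
  assumes "u \<in> carr M" "v \<in> carr M" "ple M v u" "ple M (psub M u v) (numM M n)"
  shows "\<exists>j. v = psub M u (numM M j)"
proof -
  have "sat M (All 1 (All 2 (Imp (Conj (Le (V 2) (V 1)) (Le (Sb (V 1) (V 2)) (numT n)))
      (Or_upto n (\<lambda>j. Eq (V 2) (Sb (V 1) (numT j))))))) (\<lambda>_. pzero M)"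
    (is "sat M ?\<phi> _")
  proof (rule presburger_transfer[OF PM])
    show "sat Zstr ?\<phi> (\<lambda>_. 0)"
    proof (simp, intro allI impI)
      fix u v :: int
      assume "v \<le> u \<and> u - v \<le> int n"
      then show "\<exists>j\<le>n. v = u - int j" by (intro exI[of _ "nat (u - v)"]) auto
    qed
  qed auto
  from this[simplified] assms show ?thesis by blast
qed

lemma quotient_unique:
  assumes "0 < k" "x \<in> carr M" "pcong M k x (numM M c)"
  shows "\<exists>!y. y \<in> carr M \<and> padd M (smul M k y) (numM M c) = x"
proof -
  have "sat M (All 1 (Imp (Cg k (V 1) (numT c)) (Ex 2 (Conj (Eq (Ad (smulT k (V 2)) (numT c)) (V 1))
      (All 3 (Imp (Eq (Ad (smulT k (V 3)) (numT c)) (V 1)) (Eq (V 3) (V 2)))))))) (\<lambda>_. pzero M)"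
    (is "sat M ?\<phi> _")
  proof (rule presburger_transfer[OF PM])
    show "sat Zstr ?\<phi> (\<lambda>_. 0)"
      using \<open>0 < k\<close> by (auto simp: dvd_def algebra_simps)
  qed auto
  from this[simplified] assms show ?thesis by blast
qed

lemma division_with_remainder:
  assumes "0 < m" "d \<in> carr M"
  shows "\<exists>q\<in>carr M. ple M (smul M m q) d \<and> plt M d (padd M (smul M m q) (numM M m))"
proof -
  have "sat M (All 1 (Ex 2 (Conj (Le (smulT m (V 2)) (V 1))
      (Lt (V 1) (Ad (smulT m (V 2)) (numT m)))))) (\<lambda>_. pzero M)"
    (is "sat M ?\<phi> _")
  proof (rule presburger_transfer[OF PM])
    have "int m * (d div int m) \<le> d \<and> d < int m * (d div int m) + int m" for d
    proof -
      have "int m * (d div int m) + d mod int m = d" by simp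
      moreover have "0 \<le> d mod int m" "d mod int m < int m" using \<open>0 < m\<close> by auto
      ultimately show ?thesis by linarith
    qed
    then show "sat Zstr ?\<phi> (\<lambda>_. 0)"
      by auto
  qed auto
  from this[simplified] assms show ?thesis by blast
qed

lemma quotient_large:
  assumes "q \<in> carr M" "d \<in> carr M" "plt M (numM M (m * n + m)) d"
    "plt M d (padd M (smul M m q) (numM M m))"
  shows "plt M (numM M n) q"
proof -
  have "sat M (All 1 (All 2 (Imp (Conj (Lt (numT (m * n + m)) (V 2))
      (Lt (V 2) (Ad (smulT m (V 1)) (numT m)))) (Lt (numT n) (V 1))))) (\<lambda>_. pzero M)"
    (is "sat M ?\<phi> _")
  proof (rule presburger_transfer[OF PM])
    have "int n < q" if "int m * int n + int m < d" "d < int m * q + int m" for q d :: int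
    proof -
      have "int m * int n < int m * q" using that by linarith
      then show ?thesis by (simp add: mult_less_cancel_left)
    qed
    then show "sat Zstr ?\<phi> (\<lambda>_. 0)"
      by auto
  qed auto
  from this[simplified] assms show ?thesis by blast
qed

lemma ple_shift_num:
  assumes "a \<in> carr M" "e \<in> carr M" "plt M (numM M n) e"
  shows "ple M (psub M a e) (psub M a (numM M n))" "ple M (psub M a (numM M n)) a"
    "ple M a (padd M a (numM M n))" "ple M (padd M a (numM M n)) (padd M a e)"
proof -
  have "sat M (All 1 (All 2 (Imp (Lt (numT n) (V 2))
      (Conj (Le (Sb (V 1) (V 2)) (Sb (V 1) (numT n))) (Conj (Le (Sb (V 1) (numT n)) (V 1))
      (Conj (Le (V 1) (Ad (V 1) (numT n))) (Le (Ad (V 1) (numT n)) (Ad (V 1) (V 2))))))))) (\<lambda>_. pzero M)"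
    by (rule presburger_transfer[OF PM]) (simp, auto)
  from this[simplified] assms
  show "ple M (psub M a e) (psub M a (numM M n))" "ple M (psub M a (numM M n)) a"
    "ple M a (padd M a (numM M n))" "ple M (padd M a (numM M n)) (padd M a e)"
    by blast+
qed

lemma shift_num_inj:
  assumes "a \<in> carr M" "n \<noteq> n'"
  shows "psub M a (numM M n) \<noteq> psub M a (numM M n')" "padd M a (numM M n) \<noteq> padd M a (numM M n')"
proof -
  have "sat M (All 1 (Conj (Neg (Eq (Sb (V 1) (numT n)) (Sb (V 1) (numT n'))))
      (Neg (Eq (Ad (V 1) (numT n)) (Ad (V 1) (numT n')))))) (\<lambda>_. pzero M)"
    by (rule presburger_transfer[OF PM]) (use \<open>n \<noteq> n'\<close> in auto)
  from this[simplified] assms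
  show "psub M a (numM M n) \<noteq> psub M a (numM M n')" "padd M a (numM M n) \<noteq> padd M a (numM M n')"
    by blast+
qed

lemma lower_bound_near:
  assumes "0 < m" "a \<in> carr M" "u \<in> carr M" "e \<in> carr M" "x \<in> carr M"
    "ple M (smul M m e) (psub M a u)" "ple M (pzero M) e" "ple M (psub M a e) x"
  shows "ple M u x"
proof -
  have "sat M (All 1 (All 2 (All 3 (All 4 (Imp (Conj (Le (smulT m (V 3)) (Sb (V 1) (V 2)))
      (Conj (Le Zr (V 3)) (Le (Sb (V 1) (V 3)) (V 4)))) (Le (V 2) (V 4))))))) (\<lambda>_. pzero M)"
    (is "sat M ?\<phi> _")
  proof (rule presburger_transfer[OF PM])
    have "e \<le> int m * e" if "0 \<le> e" for e :: int
      using \<open>0 < m\<close> that by (simp add: mult_le_cancel_right1)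
    then show "sat Zstr ?\<phi> (\<lambda>_. 0)"
      by (simp, smt (verit))
  qed auto
  from this[simplified] assms show ?thesis by blast
qed

lemma upper_bound_near:
  assumes "0 < m" "a \<in> carr M" "u \<in> carr M" "e \<in> carr M" "x \<in> carr M"
    "ple M (smul M m e) (psub M u a)" "ple M (pzero M) e" "ple M x (padd M a e)"
  shows "ple M x u"
proof -
  have "sat M (All 1 (All 2 (All 3 (All 4 (Imp (Conj (Le (smulT m (V 3)) (Sb (V 2) (V 1)))
      (Conj (Le Zr (V 3)) (Le (V 4) (Ad (V 1) (V 3))))) (Le (V 4) (V 2))))))) (\<lambda>_. pzero M)"
    (is "sat M ?\<phi> _")
  proof (rule presburger_transfer[OF PM])
    have "e \<le> int m * e" if "0 \<le> e" for e :: int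
      using \<open>0 < m\<close> that by (simp add: mult_le_cancel_right1)
    then show "sat Zstr ?\<phi> (\<lambda>_. 0)"
      by (simp, smt (verit))
  qed auto
  from this[simplified] assms show ?thesis by blast
qed

lemma lower_linear_near:
  assumes "1 \<le> k" "\<bar>s\<bar> < int m"
    and "a \<in> carr M" "x \<in> carr M" "y \<in> carr M" "y' \<in> carr M" "g \<in> carr M"
      "b \<in> carr M" "t \<in> carr M" "e \<in> carr M"
    and "padd M (smul M k y) (numM M c) = a" "padd M (smul M k y') (numM M c) = x"
      "ple M (smul M m e) (psub M b (padd M (ismul M s y) g))"
      "ple M (psub M a e) x" "ple M x (padd M a e)" "ple M (psub M b e) t" "ple M (pzero M) e"
  shows "ple M (padd M (ismul M s y') g) t"
proof -
  have "sat M (All 1 (All 2 (All 3 (All 4 (All 5 (All 6 (All 7 (All 8 (Imp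
     (Conj (Eq (Ad (smulT k (V 3)) (numT c)) (V 1)) (Conj (Eq (Ad (smulT k (V 4)) (numT c)) (V 2))
     (Conj (Le (smulT m (V 8)) (Sb (V 6) (Ad (ismulT s (V 3)) (V 5)))) (Conj (Le (Sb (V 1) (V 8)) (V 2))
     (Conj (Le (V 2) (Ad (V 1) (V 8))) (Conj (Le (Sb (V 6) (V 8)) (V 7)) (Le Zr (V 8))))))))
     (Le (Ad (ismulT s (V 4)) (V 5)) (V 7))))))))))) (\<lambda>_. pzero M)"
    (is "sat M ?\<phi> _")
  proof (rule presburger_transfer[OF PM])
    have int_bound: "s * y' + g \<le> t"
      if "int k * y + int c = a" "int k * y' + int c = x" "int m * e \<le> b - (s * y + g)"
        "a - e \<le> x" "x \<le> a + e" "b - e \<le> t" "0 \<le> e" for a x y y' g b t e :: int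
    proof -
      have "\<bar>s * y' - s * y\<bar> \<le> \<bar>s\<bar> * e"
        by (rule abs_scaled_quotient_diff_le[OF _ that(1,2)]) (use assms(1) that(4,5) in auto)
      moreover have "(\<bar>s\<bar> + 1) * e \<le> int m * e" using assms(2) that(7) by (simp add: mult_right_mono)
      ultimately show ?thesis using that(3,6) by (simp add: algebra_simps abs_le_iff)
    qed
    show "sat Zstr ?\<phi> (\<lambda>_. 0)"
      by (simp only: sat_All sat_Imp sat.simps sat_Le tval.simps tval_numT tval_smulT tval_ismulT
        Zstr_simps ple_Zstr numM_Zstr smul_Zstr ismul_Zstr fun_upd_apply, intro ballI impI, elim conjE)
        (rule int_bound)
  qed auto
  from this[simplified] assms(3-) show ?thesis by blast
qed

lemma upper_linear_near:
  assumes "1 \<le> k" "\<bar>s\<bar> < int m"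
    and "a \<in> carr M" "x \<in> carr M" "y \<in> carr M" "y' \<in> carr M" "g \<in> carr M"
      "b \<in> carr M" "t \<in> carr M" "e \<in> carr M"
    and "padd M (smul M k y) (numM M c) = a" "padd M (smul M k y') (numM M c) = x"
      "ple M (smul M m e) (psub M (padd M (ismul M s y) g) b)"
      "ple M (psub M a e) x" "ple M x (padd M a e)" "ple M t (padd M b e)" "ple M (pzero M) e"
  shows "ple M t (padd M (ismul M s y') g)"
proof -
  have "sat M (All 1 (All 2 (All 3 (All 4 (All 5 (All 6 (All 7 (All 8 (Imp
     (Conj (Eq (Ad (smulT k (V 3)) (numT c)) (V 1)) (Conj (Eq (Ad (smulT k (V 4)) (numT c)) (V 2))
     (Conj (Le (smulT m (V 8)) (Sb (Ad (ismulT s (V 3)) (V 5)) (V 6))) (Conj (Le (Sb (V 1) (V 8)) (V 2))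
     (Conj (Le (V 2) (Ad (V 1) (V 8))) (Conj (Le (V 7) (Ad (V 6) (V 8))) (Le Zr (V 8))))))))
     (Le (V 7) (Ad (ismulT s (V 4)) (V 5)))))))))))) (\<lambda>_. pzero M)"
    (is "sat M ?\<phi> _")
  proof (rule presburger_transfer[OF PM])
    have int_bound: "t \<le> s * y' + g"
      if "int k * y + int c = a" "int k * y' + int c = x" "int m * e \<le> s * y + g - b"
        "a - e \<le> x" "x \<le> a + e" "t \<le> b + e" "0 \<le> e" for a x y y' g b t e :: int
    proof -
      have "\<bar>s * y' - s * y\<bar> \<le> \<bar>s\<bar> * e"
        by (rule abs_scaled_quotient_diff_le[OF _ that(1,2)]) (use assms(1) that(4,5) in auto)
      moreover have "(\<bar>s\<bar> + 1) * e \<le> int m * e" using assms(2) that(7) by (simp add: mult_right_mono)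
      ultimately show ?thesis using that(3,6) by (simp add: algebra_simps abs_le_iff)
    qed
    show "sat Zstr ?\<phi> (\<lambda>_. 0)"
      by (simp only: sat_All sat_Imp sat.simps sat_Le tval.simps tval_numT tval_smulT tval_ismulT
        Zstr_simps ple_Zstr numM_Zstr smul_Zstr ismul_Zstr fun_upd_apply, intro ballI impI, elim conjE)
        (rule int_bound)
  qed auto
  from this[simplified] assms(3-) show ?thesis by blast
qed

end

section \<open>Distances to definable elements\<close>

definition infinitely_large :: "'m pstr \<Rightarrow> 'm \<Rightarrow> bool" where
  "infinitely_large M x \<longleftrightarrow> x \<in> carr M \<and> (\<forall>n. plt M (numM M n) x)"

context presburger_structure
begin

lemma pzero_dcl: "pzero M \<in> dcl M A"
proof (rule dclI)
  show "pzero M \<in> carr M" by (rule carr_closed)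
  then show "params_in M A (Eq (V 0) Zr) (\<lambda>_. pzero M)" unfolding params_in_def by auto
  show "{x \<in> carr M. sat M (Eq (V 0) Zr) ((\<lambda>_. pzero M)(0 := x))} = {pzero M}"
    using \<open>pzero M \<in> carr M\<close> by auto
qed

lemma padd_num_dcl:
  assumes "u \<in> dcl M A"
  shows "padd M u (numM M j) \<in> dcl M A"
proof (rule dcl_closed[OF assms, of 1 "\<lambda>_. pzero M" "Eq (V 0) (Ad (V 1) (numT j))"])
  show "range (\<lambda>_. pzero M) \<subseteq> carr M" using carr_closed by auto
  have "u \<in> carr M" using assms by (rule dcl_carr)
  then show "{x \<in> carr M. sat M (Eq (V 0) (Ad (V 1) (numT j))) ((\<lambda>_. pzero M)(0 := x, 1 := u))}
      = {padd M u (numM M j)}"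
    using carr_closed numM_carr by auto
qed auto

lemma psub_num_dcl:
  assumes "u \<in> dcl M A"
  shows "psub M u (numM M j) \<in> dcl M A"
proof (rule dcl_closed[OF assms, of 1 "\<lambda>_. pzero M" "Eq (V 0) (Sb (V 1) (numT j))"])
  show "range (\<lambda>_. pzero M) \<subseteq> carr M" using carr_closed by auto
  have "u \<in> carr M" using assms by (rule dcl_carr)
  then show "{x \<in> carr M. sat M (Eq (V 0) (Sb (V 1) (numT j))) ((\<lambda>_. pzero M)(0 := x, 1 := u))}
      = {psub M u (numM M j)}"
    using carr_closed numM_carr by auto
qed auto

lemma infinitely_large_diff_above:
  assumes u: "u \<in> dcl M A" and v: "v \<in> carr M" "v \<notin> dcl M A" and "ple M u v"
  shows "infinitely_large M (psub M v u)"
proof -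
  have uc: "u \<in> carr M" using u by (rule dcl_carr)
  have "plt M (numM M n) (psub M v u)" for n
  proof (rule ccontr)
    assume "\<not> plt M (numM M n) (psub M v u)"
    then have "ple M (psub M v u) (numM M n)"
      using not_plt_iff_ple carr_closed(4)[OF v(1) uc] numM_carr by blast
    then obtain j where "v = padd M u (numM M j)"
      using bounded_diff_eq_padd_num[OF uc v(1) \<open>ple M u v\<close>] by blast
    then show False using padd_num_dcl[OF u] v(2) by simp
  qed
  then show ?thesis unfolding infinitely_large_def using carr_closed(4)[OF v(1) uc] by blast
qed

lemma infinitely_large_diff_below:
  assumes u: "u \<in> dcl M A" and v: "v \<in> carr M" "v \<notin> dcl M A" and "ple M v u"
  shows "infinitely_large M (psub M u v)"
proof -
  have uc: "u \<in> carr M" using u by (rule dcl_carr)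
  have "plt M (numM M n) (psub M u v)" for n
  proof (rule ccontr)
    assume "\<not> plt M (numM M n) (psub M u v)"
    then have "ple M (psub M u v) (numM M n)"
      using not_plt_iff_ple carr_closed(4)[OF uc v(1)] numM_carr by blast
    then obtain j where "v = psub M u (numM M j)"
      using bounded_diff_eq_psub_num[OF uc v(1) \<open>ple M v u\<close>] by blast
    then show False using psub_num_dcl[OF u] v(2) by simp
  qed
  then show ?thesis unfolding infinitely_large_def using carr_closed(4)[OF uc v(1)] by blast
qed

lemma infinitely_large_nonneg: "infinitely_large M e \<Longrightarrow> ple M (pzero M) e"
  unfolding infinitely_large_def ple_def by (metis numM.simps(1))

lemma lin_eval_quotient:
  assumes "c < k" "x \<in> carr M" "pcong M k x (numM M c)"
  obtains y where "y \<in> carr M" "padd M (smul M k y) (numM M c) = x"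
    "lin_eval M (s, k, c, \<gamma>) x = padd M (ismul M s y) \<gamma>"
proof -
  define y where "y = (THE y. y \<in> carr M \<and> padd M (smul M k y) (numM M c) = x)"
  have "y \<in> carr M \<and> padd M (smul M k y) (numM M c) = x"
    unfolding y_def by (rule theI') (use quotient_unique assms in simp)
  then show ?thesis by (intro that) (simp_all add: lin_eval_def y_def)
qed

lemma lin_eval_dcl:
  assumes "a \<in> A" "a \<in> carr M" "c < k" "pcong M k a (numM M c)" "\<gamma> \<in> dcl M A"
  shows "lin_eval M (s, k, c, \<gamma>) a \<in> dcl M A"
proof -
  define \<psi> where "\<psi> = Ex 3 (Conj (Eq (Ad (smulT k (V 3)) (numT c)) (V 1))
    (Eq (V 0) (Ad (ismulT s (V 3)) (V 2))))"
  define e where "e = (\<lambda>_::nat. pzero M)(1 := a)"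
  obtain y where y: "y \<in> carr M" "padd M (smul M k y) (numM M c) = a"
    "lin_eval M (s, k, c, \<gamma>) a = padd M (ismul M s y) \<gamma>"
    using lin_eval_quotient assms(2-4) by metis
  have uniq: "y' = y" if "y' \<in> carr M" "padd M (smul M k y') (numM M c) = a" for y'
    using quotient_unique[of k a c] assms(2-4) that y(1,2) by auto
  show ?thesis
  proof (rule dcl_closed[OF assms(5), of 2 e \<psi>])
    show "range e \<subseteq> carr M" unfolding e_def using carr_closed assms(2) by auto
    show "\<forall>w\<in>fv \<psi> - {0, 2}. e w \<in> A" unfolding e_def \<psi>_def using assms(1) by auto
    have "sat M \<psi> (e(0 := x, 2 := \<gamma>)) \<longleftrightarrow>
        (\<exists>y'\<in>carr M. padd M (smul M k y') (numM M c) = a \<and> x = padd M (ismul M s y') \<gamma>)" for x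
      unfolding \<psi>_def e_def by simp
    also have "\<dots> x \<longleftrightarrow> x = lin_eval M (s, k, c, \<gamma>) a" for x
      using y uniq by metis
    finally show "{x \<in> carr M. sat M \<psi> (e(0 := x, 2 := \<gamma>))} = {lin_eval M (s, k, c, \<gamma>) a}"
      using y(1,3) carr_closed(3) ismul_carr dcl_carr[OF assms(5)] by auto
  qed simp
qed

lemma finite_has_ple_least:
  assumes "finite S" "S \<noteq> {}" "S \<subseteq> carr M"
  shows "\<exists>d\<in>S. \<forall>d'\<in>S. ple M d d'"
  using assms
proof (induction S rule: finite_ne_induct)
  case (insert x S)
  then obtain d where d: "d \<in> S" "\<forall>d'\<in>S. ple M d d'" by auto
  show ?case
  proof (cases "ple M d x")
    case True
    then show ?thesis using d by auto
  next
    case False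
    then have "ple M x d" using not_plt_iff_ple insert.prems d(1) unfolding ple_def by blast
    then show ?thesis using d insert.prems ple_trans[of x d] by auto
  qed
qed simp

lemma exists_infinitely_large_fraction:
  assumes "finite S" "S \<noteq> {}" "\<forall>d\<in>S. infinitely_large M d" "0 < m"
  shows "\<exists>e. infinitely_large M e \<and> (\<forall>d\<in>S. ple M (smul M m e) d)"
proof -
  have "S \<subseteq> carr M" using assms(3) unfolding infinitely_large_def by blast
  then obtain d where d: "d \<in> S" "\<forall>d'\<in>S. ple M d d'"
    using finite_has_ple_least assms(1,2) by blast
  have dl: "infinitely_large M d" using assms(3) d(1) by blast
  then have dc: "d \<in> carr M" unfolding infinitely_large_def by blast
  obtain q where q: "q \<in> carr M" "ple M (smul M m q) d" "plt M d (padd M (smul M m q) (numM M m))"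
    using division_with_remainder[OF assms(4) dc] by blast
  have "infinitely_large M q"
    using quotient_large[OF q(1) dc _ q(3)] dl q(1) unfolding infinitely_large_def by blast
  moreover have "ple M (smul M m q) d'" if "d' \<in> S" for d'
    using ple_trans[OF smul_carr[OF q(1)] dc] q(2) d(2) that \<open>S \<subseteq> carr M\<close> by blast
  ultimately show ?thesis by blast
qed

lemma box_comp_intv:
  assumes p: "p \<in> carr M" and e: "infinitely_large M e"
    and "c < N" "pcong M N p (numM M c)"
  shows "box_comp M (intv M (Some (psub M p e)) (Some (padd M p e)) N c) p"
proof -
  have ec: "e \<in> carr M" and ne: "plt M (numM M n) e" for n
    using e unfolding infinitely_large_def by blast+
  note shift = ple_shift_num[OF p ec ne]
  have "range (\<lambda>n. psub M p (numM M n)) \<subseteq> {x \<in> carr M. lowb M (Some (psub M p e)) x \<and> ple M x p}"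
    using shift carr_closed(4)[OF p numM_carr] by (auto simp: lowb_def)
  moreover have "inj (\<lambda>n. psub M p (numM M n))"
    using shift_num_inj[OF p] by (meson injI)
  ultimately have below: "infinite {x \<in> carr M. lowb M (Some (psub M p e)) x \<and> ple M x p}"
    by (metis infinite_super range_inj_infinite)
  have "range (\<lambda>n. padd M p (numM M n)) \<subseteq> {x \<in> carr M. ple M p x \<and> uppb M (Some (padd M p e)) x}"
    using shift carr_closed(3)[OF p numM_carr] by (auto simp: uppb_def)
  moreover have "inj (\<lambda>n. padd M p (numM M n))"
    using shift_num_inj[OF p] by (meson injI)
  ultimately have above: "infinite {x \<in> carr M. ple M p x \<and> uppb M (Some (padd M p e)) x}"
    by (metis infinite_super range_inj_infinite)
  have "ple M (psub M p e) p" "ple M p (padd M p e)"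
    using shift[of 0] ple_trans carr_closed p ec numM_carr by meson+
  then show ?thesis
    unfolding box_comp_def using below above assms carr_closed p ec
    unfolding intv_def lowb_def uppb_def
    by (intro exI[of _ "Some (psub M p e)"] exI[of _ "Some (padd M p e)"] exI[of _ N] exI[of _ c]) auto
qed

section \<open>Boxes inside a (1,1)-cell\<close>

lemma lowb_near:
  assumes "0 < m" "a \<in> carr M" "e \<in> carr M" "x \<in> carr M" "ple M (pzero M) e" "ple M (psub M a e) x"
    and "\<forall>u\<in>set_option \<alpha>. u \<in> carr M \<and> ple M (smul M m e) (psub M a u)"
  shows "lowb M \<alpha> x"
  using assms lower_bound_near[of m a _ e x] by (cases \<alpha>) (auto simp: lowb_def)

lemma uppb_near:
  assumes "0 < m" "a \<in> carr M" "e \<in> carr M" "x \<in> carr M" "ple M (pzero M) e" "ple M x (padd M a e)"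
    and "\<forall>u\<in>set_option \<beta>. u \<in> carr M \<and> ple M (smul M m e) (psub M u a)"
  shows "uppb M \<beta> x"
  using assms upper_bound_near[of m a _ e x] by (cases \<beta>) (auto simp: uppb_def)

lemma lowf_near:
  assumes \<alpha>: "\<forall>f\<in>set_option \<alpha>. B_linear_on M A D f \<and> \<bar>fst f\<bar> < int m \<and>
      ple M (smul M m e) (psub M b (lin_eval M f a))"
    and "D \<subseteq> carr M" "a \<in> D" "x \<in> D" "b \<in> carr M" "t \<in> carr M" "e \<in> carr M"
    and "ple M (psub M a e) x" "ple M x (padd M a e)" "ple M (psub M b e) t" "ple M (pzero M) e"
  shows "lowf M \<alpha> x t"
proof (cases \<alpha>)
  case (Some f)
  obtain s k c \<gamma> where f: "f = (s, k, c, \<gamma>)" by (cases f)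
  with \<alpha> Some have "c < k" "\<gamma> \<in> dcl M A" "\<forall>x\<in>D. pcong M k x (numM M c)" "\<bar>s\<bar> < int m"
    and margin: "ple M (smul M m e) (psub M b (lin_eval M f a))"
    unfolding B_linear_on_def by auto
  moreover obtain y where "y \<in> carr M" "padd M (smul M k y) (numM M c) = a"
    "lin_eval M (s, k, c, \<gamma>) a = padd M (ismul M s y) \<gamma>"
    using lin_eval_quotient calculation assms(2,3) by blast
  moreover obtain y' where "y' \<in> carr M" "padd M (smul M k y') (numM M c) = x"
    "lin_eval M (s, k, c, \<gamma>) x = padd M (ismul M s y') \<gamma>"
    using lin_eval_quotient calculation assms(2,4) by blast
  ultimately have "ple M (lin_eval M f x) t"
    using lower_linear_near[of k s m a x y y' \<gamma> b t e c] assms dcl_carr[of \<gamma>] f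
      subsetD[OF assms(2)] by auto
  then show ?thesis using Some unfolding lowf_def by simp
qed (simp add: lowf_def)

lemma uppf_near:
  assumes \<beta>: "\<forall>f\<in>set_option \<beta>. B_linear_on M A D f \<and> \<bar>fst f\<bar> < int m \<and>
      ple M (smul M m e) (psub M (lin_eval M f a) b)"
    and "D \<subseteq> carr M" "a \<in> D" "x \<in> D" "b \<in> carr M" "t \<in> carr M" "e \<in> carr M"
    and "ple M (psub M a e) x" "ple M x (padd M a e)" "ple M t (padd M b e)" "ple M (pzero M) e"
  shows "uppf M \<beta> x t"
proof (cases \<beta>)
  case (Some f)
  obtain s k c \<gamma> where f: "f = (s, k, c, \<gamma>)" by (cases f)
  with \<beta> Some have "c < k" "\<gamma> \<in> dcl M A" "\<forall>x\<in>D. pcong M k x (numM M c)" "\<bar>s\<bar> < int m"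
    and margin: "ple M (smul M m e) (psub M (lin_eval M f a) b)"
    unfolding B_linear_on_def by auto
  moreover obtain y where "y \<in> carr M" "padd M (smul M k y) (numM M c) = a"
    "lin_eval M (s, k, c, \<gamma>) a = padd M (ismul M s y) \<gamma>"
    using lin_eval_quotient calculation assms(2,3) by blast
  moreover obtain y' where "y' \<in> carr M" "padd M (smul M k y') (numM M c) = x"
    "lin_eval M (s, k, c, \<gamma>) x = padd M (ismul M s y') \<gamma>"
    using lin_eval_quotient calculation assms(2,4) by blast
  ultimately have "ple M t (lin_eval M f x)"
    using upper_linear_near[of k s m a x y y' \<gamma> b t e c] assms dcl_carr[of \<gamma>] f
      subsetD[OF assms(2)] by auto
  then show ?thesis using Some unfolding uppf_def by simp
qed (simp add: uppf_def)

lemma intv_box_subset: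
  assumes "0 < m" and a: "a \<in> intv M \<alpha>D \<beta>D ND cD" and "b \<in> carr M" "e \<in> carr M" "ple M (pzero M) e"
    and "\<forall>u\<in>set_option \<alpha>D. u \<in> carr M \<and> ple M (smul M m e) (psub M a u)"
      "\<forall>u\<in>set_option \<beta>D. u \<in> carr M \<and> ple M (smul M m e) (psub M u a)"
    and "\<forall>f\<in>set_option \<alpha>. B_linear_on M A (intv M \<alpha>D \<beta>D ND cD) f \<and> \<bar>fst f\<bar> < int m \<and>
        ple M (smul M m e) (psub M b (lin_eval M f a))"
      "\<forall>f\<in>set_option \<beta>. B_linear_on M A (intv M \<alpha>D \<beta>D ND cD) f \<and> \<bar>fst f\<bar> < int m \<and>
        ple M (smul M m e) (psub M (lin_eval M f a) b)"
  shows "intv M (Some (psub M a e)) (Some (padd M a e)) ND cD \<times> intv M (Some (psub M b e)) (Some (padd M b e)) N k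
    \<subseteq> {(x, t). x \<in> intv M \<alpha>D \<beta>D ND cD \<and> t \<in> carr M \<and> lowf M \<alpha> x t \<and> uppf M \<beta> x t \<and>
        pcong M N t (numM M k)}"
proof clarify
  fix x t
  assume x: "x \<in> intv M (Some (psub M a e)) (Some (padd M a e)) ND cD"
    and t: "t \<in> intv M (Some (psub M b e)) (Some (padd M b e)) N k"
  have D: "intv M \<alpha>D \<beta>D ND cD \<subseteq> carr M" unfolding intv_def by blast
  have ac: "a \<in> carr M" using a D by blast
  have "x \<in> intv M \<alpha>D \<beta>D ND cD"
    using x lowb_near[OF assms(1) ac] uppb_near[OF assms(1) ac] assms(4-7)
    unfolding intv_def lowb_def uppb_def by simp
  moreover have "lowf M \<alpha> x t" "uppf M \<beta> x t"
    using lowf_near[OF assms(8) D a calculation] uppf_near[OF assms(9) D a calculation] x t assms(3-5)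
    unfolding intv_def lowb_def uppb_def by simp_all
  ultimately show "x \<in> intv M \<alpha>D \<beta>D ND cD \<and> t \<in> carr M \<and> lowf M \<alpha> x t \<and> uppf M \<beta> x t \<and>
      pcong M N t (numM M k)"
    using t unfolding intv_def by simp
qed

lemma definable2_intv_times:
  assumes "l1 \<in> carr M" "u1 \<in> carr M" "l2 \<in> carr M" "u2 \<in> carr M"
  shows "definable2 M (intv M (Some l1) (Some u1) N1 c1 \<times> intv M (Some l2) (Some u2) N2 c2)"
proof -
  define e where "e = (\<lambda>_::nat. pzero M)(2 := l1, 3 := u1, 4 := l2, 5 := u2)"
  define \<phi> where "\<phi> = Conj (Le (V 2) (V 0)) (Conj (Le (V 0) (V 3)) (Conj (Cg N1 (V 0) (numT c1))
     (Conj (Le (V 4) (V 1)) (Conj (Le (V 1) (V 5)) (Cg N2 (V 1) (numT c2))))))"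
  have "range e \<subseteq> carr M" unfolding e_def using assms carr_closed by auto
  moreover have "intv M (Some l1) (Some u1) N1 c1 \<times> intv M (Some l2) (Some u2) N2 c2 =
      {(x, y). x \<in> carr M \<and> y \<in> carr M \<and> sat M \<phi> (e(0 := x, 1 := y))}"
    unfolding \<phi>_def e_def intv_def lowb_def uppb_def by auto
  ultimately show ?thesis unfolding definable2_def by blast
qed

lemma infinitely_large_exists:
  assumes "a \<in> carr M" "a \<notin> dcl M A"
  shows "\<exists>d. infinitely_large M d"
proof (cases "ple M (pzero M) a")
  case True
  then show ?thesis using infinitely_large_diff_above[OF pzero_dcl assms] by blast
next
  case False
  then have "ple M a (pzero M)" using not_plt_iff_ple[OF assms(1) carr_closed(1)] by (simp add: ple_def)
  then show ?thesis using infinitely_large_diff_below[OF pzero_dcl assms] by blast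
qed

lemma lin_eval_dcl_insert:
  assumes "B_linear_on M A D f" "a \<in> D" "D \<subseteq> carr M"
  shows "lin_eval M f a \<in> dcl M (A \<union> {a})"
proof -
  obtain s k c \<gamma> where f: "f = (s, k, c, \<gamma>)" by (cases f)
  with assms have "c < k" "\<gamma> \<in> dcl M (A \<union> {a})" "pcong M k a (numM M c)"
    unfolding B_linear_on_def using dcl_mono[of A "A \<union> {a}" M] by auto
  then show ?thesis using lin_eval_dcl[of a "A \<union> {a}"] assms(2,3) f by auto
qed

lemma box_around_in_11cell:
  assumes C: "B_definable_11cell M A C" and ab: "(a, b) \<in> C"
    and a: "a \<notin> dcl M A" and b: "b \<notin> dcl M (A \<union> {a})"
  shows "\<exists>X. definable2 M X \<and> box_around M X (a, b) \<and> X \<subseteq> C"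
proof -
  obtain D \<alpha> \<beta> N k where "B_definable_1cell M A D"
    and lin: "\<forall>f\<in>set_option \<alpha>. B_linear_on M A D f" "\<forall>f\<in>set_option \<beta>. B_linear_on M A D f"
    and "k < N" and C_eq: "C = {(x, t). x \<in> D \<and> t \<in> carr M \<and> lowf M \<alpha> x t \<and> uppf M \<beta> x t \<and>
      pcong M N t (numM M k)}"
    using C unfolding B_definable_11cell_def by blast
  then obtain \<alpha>D \<beta>D ND cD where "cD < ND" and bounds: "set_option \<alpha>D \<subseteq> dcl M A" "set_option \<beta>D \<subseteq> dcl M A"
    and D_eq: "D = intv M \<alpha>D \<beta>D ND cD"
    unfolding B_definable_1cell_def by blast
  have D: "D \<subseteq> carr M" unfolding D_eq intv_def by blast
  have aD: "a \<in> D" and bc: "b \<in> carr M" and "lowf M \<alpha> a b" "uppf M \<beta> a b" "pcong M N b (numM M k)"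
    using ab unfolding C_eq by auto
  then have ac: "a \<in> carr M" and "lowb M \<alpha>D a" "uppb M \<beta>D a" "pcong M ND a (numM M cD)"
    using D unfolding D_eq intv_def by auto
  define m where "m = Suc (\<Sum>f\<in>set_option \<alpha> \<union> set_option \<beta>. nat \<bar>fst f\<bar>)"
  have m: "\<bar>fst f\<bar> < int m" if "f \<in> set_option \<alpha> \<union> set_option \<beta>" for f
  proof -
    have "nat \<bar>fst f\<bar> \<le> (\<Sum>f\<in>set_option \<alpha> \<union> set_option \<beta>. nat \<bar>fst f\<bar>)"
      using that by (intro member_le_sum) auto
    then show ?thesis unfolding m_def by linarith
  qed
  \<comment> \<open>\<open>d0\<close> only makes \<open>Ds\<close> nonempty when the cell has no bounds.\<close>
  obtain d0 where "infinitely_large M d0" using infinitely_large_exists[OF ac a] by blast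
  define Ds where "Ds = insert d0 ((\<lambda>u. psub M a u) ` set_option \<alpha>D \<union> (\<lambda>u. psub M u a) ` set_option \<beta>D
    \<union> (\<lambda>f. psub M b (lin_eval M f a)) ` set_option \<alpha> \<union> (\<lambda>f. psub M (lin_eval M f a) b) ` set_option \<beta>)"
  have "infinitely_large M (psub M a u)" if "u \<in> set_option \<alpha>D" for u
    using that bounds(1) \<open>lowb M \<alpha>D a\<close> infinitely_large_diff_above[OF _ ac a] by (auto simp: lowb_def)
  moreover have "infinitely_large M (psub M u a)" if "u \<in> set_option \<beta>D" for u
    using that bounds(2) \<open>uppb M \<beta>D a\<close> infinitely_large_diff_below[OF _ ac a] by (auto simp: uppb_def)
  moreover have "infinitely_large M (psub M b (lin_eval M f a))" if "f \<in> set_option \<alpha>" for f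
    using that lin(1) \<open>lowf M \<alpha> a b\<close> lin_eval_dcl_insert[OF _ aD D]
      infinitely_large_diff_above[OF _ bc b] by (auto simp: lowf_def)
  moreover have "infinitely_large M (psub M (lin_eval M f a) b)" if "f \<in> set_option \<beta>" for f
    using that lin(2) \<open>uppf M \<beta> a b\<close> lin_eval_dcl_insert[OF _ aD D]
      infinitely_large_diff_below[OF _ bc b] by (auto simp: uppf_def)
  ultimately have "\<forall>d\<in>Ds. infinitely_large M d"
    unfolding Ds_def using \<open>infinitely_large M d0\<close> by blast
  then obtain e where e: "infinitely_large M e" and margin: "\<forall>d\<in>Ds. ple M (smul M m e) d"
    using exists_infinitely_large_fraction[of Ds m] unfolding Ds_def m_def by auto
  have ec: "e \<in> carr M" using e unfolding infinitely_large_def by blast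
  define X where "X = intv M (Some (psub M a e)) (Some (padd M a e)) ND cD \<times>
    intv M (Some (psub M b e)) (Some (padd M b e)) N k"
  have "X \<subseteq> C" unfolding X_def C_eq D_eq
  proof (rule intv_box_subset)
    show "0 < m" "b \<in> carr M" "e \<in> carr M" "ple M (pzero M) e" "a \<in> intv M \<alpha>D \<beta>D ND cD"
      using bc ec infinitely_large_nonneg[OF e] aD unfolding m_def D_eq by auto
  qed (use margin bounds lin m dcl_carr in \<open>auto simp: Ds_def D_eq\<close>)
  moreover have "box_around M X (a, b)"
    unfolding X_def box_around_def
    using box_comp_intv[OF ac e \<open>cD < ND\<close>] box_comp_intv[OF bc e \<open>k < N\<close>] \<open>pcong M ND a (numM M cD)\<close>
      \<open>pcong M N b (numM M k)\<close> by auto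
  moreover have "definable2 M X"
    unfolding X_def by (rule definable2_intv_times) (use carr_closed ac bc ec in auto)
  ultimately show ?thesis by blast
qed

end

lemma tdim_pair_eq_2_dcl_indep:
  assumes "tdim M A [a, b] = 2"
  shows "a \<notin> dcl M (A \<union> {b})" "b \<notin> dcl M (A \<union> {a})"
proof -
  define F where "F = {S. S \<subseteq> {a, b} \<and> dcl_indep M A S}"
  have "finite (card ` F)" "card ` F \<noteq> {}" unfolding F_def dcl_indep_def by auto
  moreover have "Max (card ` F) = 2" using assms unfolding tdim_def F_def by simp
  ultimately have "2 \<in> card ` F" using Max_in by fastforce
  then obtain S where "S \<in> F" "card S = 2" by (auto simp: eq_commute)
  then have "S = {a, b}" "a \<noteq> b" "dcl_indep M A S"
    unfolding F_def by (auto simp: card_2_iff)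
  then show "a \<notin> dcl M (A \<union> {b})" "b \<notin> dcl M (A \<union> {a})"
    unfolding dcl_indep_def by (auto simp: insert_Diff_if)
qed

theorem lemma3p3:
  fixes M :: "'m pstr" and M0 :: "'m set" and C :: "('m \<times> 'm) set" and a b :: 'm
  assumes "presburger_model M"
    and "saturated M"
    and "elem_sub M0 M"
    and "M0 \<prec> carr M"
    and "B_definable_11cell M M0 C"
    and "(a, b) \<in> C"
    and "tdim M M0 [a, b] = 2"
  shows "\<exists>X. definable2 M X \<and> box_around M X (a, b) \<and> X \<subseteq> C"
proof -
  interpret presburger_structure M by unfold_locales (fact assms(1))
  have "a \<notin> dcl M M0"
    using tdim_pair_eq_2_dcl_indep(1)[OF assms(7)] dcl_mono[of M0 "M0 \<union> {b}" M] by blast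
  moreover have "b \<notin> dcl M (M0 \<union> {a})"
    using tdim_pair_eq_2_dcl_indep(2)[OF assms(7)] .
  ultimately show ?thesis
    using box_around_in_11cell[OF assms(5,6)] by blast
qed

end
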